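(* For the modular data of the quantum double of $S_3$, the modular invariants $Z_{(21)},Z_{(61)},Z_{(3)},Z_{(4)},Z_{(1)},Z_{(12)},Z_{(2)},Z_{(16)}$ are nimless.
   Context: Primaries $0,\dots,7$, all self-conjugate, with $S=\frac16\begin{pmatrix}1&1&2&2&2&2&3&3\\1&1&2&2&2&2&-3&-3\\2&2&4&-2&-2&-2&0&0\\2&2&-2&4&-2&-2&0&0\\2&2&-2&-2&-2&4&0&0\\2&2&-2&-2&4&-2&0&0\\3&-3&0&0&0&0&3&-3\\3&-3&0&0&0&0&-3&3\end{pmatrix}$, $T=\mathrm{diag}(1,1,1,1,e^{2\pi i/3},e^{4\pi i/3},1,-1)$, fusion coefficients $N_{\lambda\mu}^\nu=\sum_\rho S_{\lambda\rho}S_{\mu\rho}\overline{S_{\nu\rho}}/S_{0\rho}$. Matrices are written as $\sum Z_{\lambda\mu}\chi_\lambda\chi_\mu^*$ (products of linear forms $st^*$ meaning the matrix of products of coefficients). $Z_{(1)}=|\chi_0+\chi_1+\chi_3|^2+\chi_2\chi_3^*+\chi_3\chi_2^*+|\chi_3|^2+|\chi_4|^2+|\chi_5|^2$; $Z_{(2)}=|\chi_0+\chi_1+\chi_3|^2+|\chi_2|^2+2|\chi_3|^2+|\chi_4|^2+|\chi_5|^2$; $Z_{(3)}=|\chi_0+\chi_1+\chi_2|^2+|\chi_2|^2+\chi_2\chi_3^*+\chi_3\chi_2^*+|\chi_4|^2+|\chi_5|^2$; $Z_{(4)}=|\chi_0+\chi_1+\chi_2|^2+2|\chi_2|^2+|\chi_3|^2+|\chi_4|^2+|\chi_5|^2$;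 $Z_{(21)}=(\chi_0+\chi_1+\chi_3)(\chi_0+\chi_1+\chi_2)^*+2\chi_3\chi_2^*+\chi_2\chi_3^*+|\chi_4|^2+|\chi_5|^2$, $Z_{(12)}=Z_{(21)}^t$; $Z_{(61)}=(\chi_0+\chi_1+\chi_3)(\chi_0+\chi_1+\chi_2)^*+\chi_3\chi_2^*+\chi_2\chi_2^*+|\chi_3|^2+|\chi_4|^2+|\chi_5|^2$, $Z_{(16)}=Z_{(61)}^t$. A nimrep of dimension $n$: non-negative integer $n\times n$ matrices $G_\lambda$ with $G_0=I$, $G_{\bar\lambda}=G_\lambda^t$, $G_\lambda G_\mu=\sum_\nu N_{\lambda\mu}^\nu G_\nu$. $\mathrm{Exp}(Z)$ is the multiset with $Z_{\mu\mu}$ copies of $\mu$. A nimrep matches $Z$ if $n=\mathrm{Tr}\,Z$ and the $G_\lambda$ are simultaneously unitarily diagonalisable with joint eigenvalues $(S_{\lambda\mu}/S_{0\mu})_\lambda$, $\mu$ running through $\mathrm{Exp}(Z)$ with multiplicity. $Z$ is nimless if no matching nimrep exists. *)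

theory Defs
  imports Complex_Main
begin

text \<open>Modular data of the quantum double of S3, primaries 0..7 (all self-conjugate).
  The S-matrix is real, so complex conjugation of its entries is the identity.\<close>

definition S6 :: "int list list" where
  "S6 = [[1,1,2,2,2,2,3,3],
         [1,1,2,2,2,2,-3,-3],
         [2,2,4,-2,-2,-2,0,0],
         [2,2,-2,4,-2,-2,0,0],
         [2,2,-2,-2,-2,4,0,0],
         [2,2,-2,-2,4,-2,0,0],
         [3,-3,0,0,0,0,3,-3],
         [3,-3,0,0,0,0,-3,3]]"

definition Smat :: "nat \<Rightarrow> nat \<Rightarrow> real" where
  "Smat l m = real_of_int ((S6 ! l) ! m) / 6"

definition conjp :: "nat \<Rightarrow> nat" where
  "conjp l = l"

text \<open>Verlinde formula (S real, so conj S = S).\<close>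
definition fusionN :: "nat \<Rightarrow> nat \<Rightarrow> nat \<Rightarrow> real" where
  "fusionN l m v = (\<Sum>r<8. Smat l r * Smat m r * Smat v r / Smat 0 r)"

definition is_nimrep :: "nat \<Rightarrow> (nat \<Rightarrow> nat \<Rightarrow> nat \<Rightarrow> nat) \<Rightarrow> bool" where
  "is_nimrep n G \<longleftrightarrow>
     (\<forall>i<n. \<forall>j<n. G 0 i j = (if i = j then 1 else 0)) \<and>
     (\<forall>l<8. \<forall>i<n. \<forall>j<n. G (conjp l) i j = G l j i) \<and>
     (\<forall>l<8. \<forall>m<8. \<forall>i<n. \<forall>j<n.
        real (\<Sum>k<n. G l i k * G m k j) = (\<Sum>v<8. fusionN l m v * real (G v i j)))"

text \<open>Exp(Z) enumerated with multiplicity as a list mu (mu ! j = primary of j-th eigenvector).\<close>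
definition matches :: "(nat \<Rightarrow> nat \<Rightarrow> nat) \<Rightarrow> nat \<Rightarrow> (nat \<Rightarrow> nat \<Rightarrow> nat \<Rightarrow> nat) \<Rightarrow> bool" where
  "matches Z n G \<longleftrightarrow>
     n = (\<Sum>v<8. Z v v) \<and>
     (\<exists>mu :: nat list. \<exists>U :: nat \<Rightarrow> nat \<Rightarrow> complex.
        length mu = n \<and> (\<forall>v<8. count_list mu v = Z v v) \<and> set mu \<subseteq> {..<8} \<and>
        (\<forall>i<n. \<forall>j<n. (\<Sum>k<n. cnj (U k i) * U k j) = (if i = j then 1 else 0)) \<and>
        (\<forall>l<8. \<forall>i<n. \<forall>j<n.
           (\<Sum>k<n. of_nat (G l i k) * U k j)
             = U i j * complex_of_real (Smat l (mu ! j) / Smat 0 (mu ! j))))"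

definition nimless :: "(nat \<Rightarrow> nat \<Rightarrow> nat) \<Rightarrow> bool" where
  "nimless Z \<longleftrightarrow> \<not> (\<exists>n G. is_nimrep n G \<and> matches Z n G)"

definition ind :: "nat set \<Rightarrow> nat \<Rightarrow> nat" where
  "ind A x = (if x \<in> A then 1 else 0)"

definition Eu :: "nat \<Rightarrow> nat \<Rightarrow> nat \<Rightarrow> nat \<Rightarrow> nat" where
  "Eu a b x y = (if x = a \<and> y = b then 1 else 0)"

definition la :: "nat \<Rightarrow> nat" where "la = ind {0,1,3}"   (* chi0+chi1+chi3 *)
definition lb :: "nat \<Rightarrow> nat" where "lb = ind {0,1,2}"   (* chi0+chi1+chi2 *)

definition Z1 :: "nat \<Rightarrow> nat \<Rightarrow> nat" where
  "Z1 x y = la x * la y + Eu 2 3 x y + Eu 3 2 x y + Eu 3 3 x y + Eu 4 4 x y + Eu 5 5 x y"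
definition Z2 :: "nat \<Rightarrow> nat \<Rightarrow> nat" where
  "Z2 x y = la x * la y + Eu 2 2 x y + 2 * Eu 3 3 x y + Eu 4 4 x y + Eu 5 5 x y"
definition Z3 :: "nat \<Rightarrow> nat \<Rightarrow> nat" where
  "Z3 x y = lb x * lb y + Eu 2 2 x y + Eu 2 3 x y + Eu 3 2 x y + Eu 4 4 x y + Eu 5 5 x y"
definition Z4 :: "nat \<Rightarrow> nat \<Rightarrow> nat" where
  "Z4 x y = lb x * lb y + 2 * Eu 2 2 x y + Eu 3 3 x y + Eu 4 4 x y + Eu 5 5 x y"
definition Z21 :: "nat \<Rightarrow> nat \<Rightarrow> nat" where
  "Z21 x y = la x * lb y + 2 * Eu 3 2 x y + Eu 2 3 x y + Eu 4 4 x y + Eu 5 5 x y"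
definition Z12 :: "nat \<Rightarrow> nat \<Rightarrow> nat" where
  "Z12 x y = Z21 y x"
definition Z61 :: "nat \<Rightarrow> nat \<Rightarrow> nat" where
  "Z61 x y = la x * lb y + Eu 3 2 x y + Eu 2 2 x y + Eu 3 3 x y + Eu 4 4 x y + Eu 5 5 x y"
definition Z16 :: "nat \<Rightarrow> nat \<Rightarrow> nat" where
  "Z16 x y = Z61 y x"

end

theory Submission
  imports Defs "Jordan_Normal_Form.Determinant"
begin

(* For a matching nimrep, the joint eigenspace of the G_l belonging to the exponent m has
   orthogonal projection P_m = sum_l S_0m S_lm G_l, a combination of the G_l with denominator
   36, 9 or 4. All eight Z contain the exponents 0, 1, 4 exactly once and 6, 7 not at all, so
   P_6 = P_7 = 0 gives G_1 = G_0 and G_7 = G_6, while P_0, P_1, P_4 have rank one.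
   Since P_1 = P_0 - G_6/3 has the same diagonal as P_0, the two rank-one matrices agree up to
   signs s_i s_j; G_6 vanishes between indices of equal sign and equals 6 P_0 between indices
   of opposite sign, and orthogonality of P_0 and P_1 makes both signs carry half the trace of P_0.
   Hence the squares of G_6 across the two parts sum to 9, which in dimension 6 or 8 forces G_6
   to be the adjacency matrix of K_{3,3}. The fusion rule for G_6 G_6 then makes 3 P_4 an integer
   rank-one matrix whose columns sum to 0 over each part (G_6 P_4 = 0), so its trace is even,
   contradicting trace P_4 = 1. For Z_(21) and Z_(12) the exponents 2, 3 are missing as well,
   and 3 P_4 = 2 G_0 - G_4 would be a positive semidefinite integer rank-one matrix of trace 3
   with nonpositive off-diagonal entries, which does not exist. *)

lemma int_square_ne_2: "(k::int)^2 \<noteq> 2"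
proof
  assume k2: "k^2 = 2"
  then have "even k"
    using even_power[of k 2] by simp
  then obtain j where "k = 2 * j" ..
  then have "2 * j^2 = 1"
    using k2 by (simp add: power2_eq_square)
  then show False
    by (metis dvd_triv_left odd_one)
qed

lemma even_trace_if_gram_zero_column_sums:
  fixes K :: "nat \<Rightarrow> nat \<Rightarrow> int"
  assumes "finite S"
    and gram: "\<And>i j. i \<in> S \<Longrightarrow> j \<in> S \<Longrightarrow> (K i j)^2 = K i i * K j j"
    and column_sums: "\<And>j. j \<in> S \<Longrightarrow> (\<Sum>i\<in>S. K i j) = 0"
  shows "even (\<Sum>i\<in>S. K i i)"
proof -
  define t where "t = (\<Sum>i\<in>S. K i i)"
  have "even (t * K j j)" if j: "j \<in> S" for j
  proof -
    have "t * K j j = (\<Sum>i\<in>S. (K i j)^2)"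
      using gram j by (simp add: t_def sum_distrib_right)
    also have "\<dots> = (\<Sum>i\<in>S. K i j) + (\<Sum>i\<in>S. K i j * (K i j - 1))"
      by (simp add: sum.distrib[symmetric] power2_eq_square algebra_simps)
    also have "\<dots> = (\<Sum>i\<in>S. K i j * (K i j - 1))"
      using column_sums j by simp
    finally show ?thesis
      by (simp add: dvd_sum)
  qed
  then have "even (\<Sum>j\<in>S. t * K j j)"
    by (simp add: dvd_sum)
  then have "even (t * t)"
    by (simp add: t_def sum_distrib_left)
  then show ?thesis
    by (simp add: t_def)
qed

lemma card_gram_support_le_2:
  fixes K :: "nat \<Rightarrow> nat \<Rightarrow> int"
  assumes "finite I"
    and diag: "\<And>i. i \<in> I \<Longrightarrow> 0 \<le> K i i"
    and offdiag: "\<And>i j. i \<in> I \<Longrightarrow> j \<in> I \<Longrightarrow> i \<noteq> j \<Longrightarrow> K i j \<le> 0"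
    and gram: "\<And>i j. i \<in> I \<Longrightarrow> j \<in> I \<Longrightarrow> (K i j)^2 = K i i * K j j"
    and block_sums: "\<And>T. T \<subseteq> I \<Longrightarrow> 0 \<le> (\<Sum>i\<in>T. \<Sum>j\<in>T. K i j)"
    and trace: "(\<Sum>i\<in>I. K i i) \<le> 3"
  shows "card {i\<in>I. K i i \<noteq> 0} \<le> 2"
proof -
  define T where "T = {i\<in>I. K i i \<noteq> 0}"
  define t where "t = card T"
  have "T \<subseteq> I" "finite T"
    using \<open>finite I\<close> by (auto simp: T_def)
  have trace_T: "(\<Sum>i\<in>T. K i i) \<le> 3"
    using trace \<open>finite I\<close> by (subst sum.mono_neutral_left[of I T]) (auto simp: T_def)
  have offdiag_T: "K i j \<le> -1" if "i \<in> T" "j \<in> T" "i \<noteq> j" for i j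
  proof -
    have "0 < K i i * K j j"
      using that diag by (auto simp: T_def intro: mult_pos_pos order.not_eq_order_implies_strict)
    then have "K i j \<noteq> 0"
      using gram that \<open>T \<subseteq> I\<close> by (metis in_mono less_irrefl power_zero_numeral)
    then show ?thesis
      using offdiag that \<open>T \<subseteq> I\<close> by force
  qed
  have row_sums: "(\<Sum>j\<in>T. K i j) \<le> K i i - (int t - 1)" if "i \<in> T" for i
  proof -
    have "(\<Sum>j\<in>T. K i j) = K i i + (\<Sum>j\<in>T-{i}. K i j)"
      using that \<open>finite T\<close> by (simp add: sum.remove)
    also have "(\<Sum>j\<in>T-{i}. K i j) \<le> (\<Sum>j\<in>T-{i}. -1)"
      using offdiag_T that by (intro sum_mono) auto
    also have "(\<Sum>j\<in>T-{i}. -1) = - (int t - 1)"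
    proof -
      have "0 < t"
        using that \<open>finite T\<close> card_gt_0_iff by (auto simp: t_def)
      then show ?thesis
        using that \<open>finite T\<close> by (simp add: t_def card_Diff_singleton of_nat_diff)
    qed
    finally show ?thesis
      by simp
  qed
  have "0 \<le> (\<Sum>i\<in>T. \<Sum>j\<in>T. K i j)"
    using block_sums \<open>T \<subseteq> I\<close> by blast
  also have "\<dots> \<le> (\<Sum>i\<in>T. K i i - (int t - 1))"
    using row_sums by (intro sum_mono) auto
  also have "\<dots> \<le> 3 - int t * (int t - 1)"
    using trace_T by (simp add: sum_subtractf t_def)
  finally have "int t * (int t - 1) \<le> 3" by simp
  then have "\<not> 3 \<le> t"
    using mult_mono[of 3 "int t" 2 "int t - 1"] by linarith
  then show ?thesis
    by (simp add: T_def t_def)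
qed

lemma gram_trace_ne_3:
  fixes K :: "nat \<Rightarrow> nat \<Rightarrow> int"
  assumes "finite I"
    and diag: "\<And>i. i \<in> I \<Longrightarrow> 0 \<le> K i i \<and> K i i \<le> 2"
    and offdiag: "\<And>i j. i \<in> I \<Longrightarrow> j \<in> I \<Longrightarrow> i \<noteq> j \<Longrightarrow> K i j \<le> 0"
    and gram: "\<And>i j. i \<in> I \<Longrightarrow> j \<in> I \<Longrightarrow> (K i j)^2 = K i i * K j j"
    and block_sums: "\<And>T. T \<subseteq> I \<Longrightarrow> 0 \<le> (\<Sum>i\<in>T. \<Sum>j\<in>T. K i j)"
  shows "(\<Sum>i\<in>I. K i i) \<noteq> 3"
proof
  assume trace: "(\<Sum>i\<in>I. K i i) = 3"
  define T where "T = {i\<in>I. K i i \<noteq> 0}"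
  have "T \<subseteq> I" "finite T"
    using \<open>finite I\<close> by (auto simp: T_def)
  have trace_T: "(\<Sum>i\<in>T. K i i) = 3"
    using trace \<open>finite I\<close> by (subst sum.mono_neutral_left[of I T]) (auto simp: T_def)
  have "card T \<le> 2"
    unfolding T_def using assms trace by (intro card_gram_support_le_2) auto
  moreover have "3 \<le> 2 * card T"
  proof -
    have "(\<Sum>i\<in>T. K i i) \<le> (\<Sum>i\<in>T. 2)"
      using diag \<open>T \<subseteq> I\<close> by (intro sum_mono) auto
    then show ?thesis
      using trace_T by simp
  qed
  ultimately have "card T = 2"
    by linarith
  then obtain a b where ab: "T = {a, b}" "a \<noteq> b"
    by (meson card_2_iff)
  then have "K a a + K b b = 3" "a \<in> I" "b \<in> I" "K a a \<noteq> 0" "K b b \<noteq> 0"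
    using trace_T \<open>T \<subseteq> I\<close> by (auto simp: T_def)
  then have "K a a * K b b = 2"
    using diag[of a] diag[of b] by (smt (verit) mult_cancel_left2 mult_cancel_right2)
  then show False
    using gram[of a b] int_square_ne_2 \<open>a \<in> I\<close> \<open>b \<in> I\<close> by simp
qed

lemma factor_pair_eq_3_3:
  fixes p q :: nat
  assumes "p + q \<in> {6, 8}" "1 \<le> p" "1 \<le> q" "p * q \<le> 9" "3 dvd p * q"
  shows "p = 3 \<and> q = 3"
proof -
  have "p = 1 \<or> p = 2 \<or> p = 3 \<or> p = 4 \<or> p = 5 \<or> p = 6 \<or> p = 7"
    "q = 1 \<or> q = 2 \<or> q = 3 \<or> q = 4 \<or> q = 5 \<or> q = 6 \<or> q = 7"
    using assms(1-3) by auto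
  then show ?thesis
    using assms by (elim disjE) simp_all
qed

lemma bipartite_sum_squares_9:
  fixes f :: "nat \<Rightarrow> nat \<Rightarrow> nat"
  assumes "finite P" "finite M"
    and pos: "\<And>i j. i \<in> P \<Longrightarrow> j \<in> M \<Longrightarrow> 1 \<le> f i j"
    and squares: "(\<Sum>i\<in>P. \<Sum>j\<in>M. (f i j)^2) = 9"
    and card: "card P + card M \<in> {6, 8}"
  shows "card P = 3 \<and> card M = 3 \<and> (\<forall>i\<in>P. \<forall>j\<in>M. f i j = 1)"
proof -
  define p q where "p = card P" and "q = card M"
  define excess where "excess = (\<Sum>i\<in>P. \<Sum>j\<in>M. (f i j)^2 - 1)"
  have "(\<Sum>i\<in>P. \<Sum>j\<in>M. (f i j)^2) = (\<Sum>i\<in>P. \<Sum>j\<in>M. ((f i j)^2 - 1) + 1)"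
    using pos by (intro sum.cong refl) (simp add: Suc_le_eq)
  also have "\<dots> = excess + p * q"
    by (simp only: sum.distrib sum_constant) (simp add: excess_def p_def q_def)
  finally have excess: "p * q + excess = 9"
    using squares by simp
  have "P \<noteq> {}" "M \<noteq> {}"
    using squares by auto
  then have "1 \<le> p" "1 \<le> q"
    using \<open>finite P\<close> \<open>finite M\<close> by (auto simp: p_def q_def Suc_le_eq card_gt_0_iff)
  then have "p + q \<le> p * q + 1"
    by (cases p; cases q) auto
  then have "5 \<le> p * q"
    using card by (auto simp: p_def q_def)
  have at_most_2: "f i j \<le> 2" if "i \<in> P" "j \<in> M" for i j
  proof (rule ccontr)
    assume "\<not> f i j \<le> 2"
    then have "8 \<le> (f i j)^2 - 1"
      using power_mono[of 3 "f i j" 2] by simp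
    also have "\<dots> \<le> (\<Sum>j\<in>M. (f i j)^2 - 1)"
      using that \<open>finite M\<close> by (intro member_le_sum) auto
    also have "\<dots> \<le> excess"
      unfolding excess_def using that \<open>finite P\<close>
      by (intro member_le_sum[where f = "\<lambda>i. \<Sum>j\<in>M. (f i j)^2 - 1"]) auto
    finally show False
      using excess \<open>5 \<le> p * q\<close> by linarith
  qed
  have "3 dvd (f i j)^2 - 1" if "i \<in> P" "j \<in> M" for i j
  proof -
    have "f i j = 1 \<or> f i j = 2"
      using at_most_2[OF that] pos[OF that] by linarith
    then show ?thesis
      by auto
  qed
  then have "3 dvd excess"
    unfolding excess_def by (intro dvd_sum) auto
  moreover have "3 dvd p * q + excess"
    using excess by simp
  ultimately have "3 dvd p * q"
    by (simp add: dvd_add_left_iff)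
  have "p = 3 \<and> q = 3"
    using card excess \<open>1 \<le> p\<close> \<open>1 \<le> q\<close> \<open>3 dvd p * q\<close>
    by (intro factor_pair_eq_3_3) (auto simp: p_def q_def)
  then have "excess = 0"
    using excess by simp
  then have "(f i j)^2 \<le> 1" if "i \<in> P" "j \<in> M" for i j
    using that \<open>finite P\<close> \<open>finite M\<close> by (simp add: excess_def)
  then have "\<forall>i\<in>P. \<forall>j\<in>M. f i j = 1"
    using pos by (metis le_antisym one_le_power power_one_right self_le_power zero_less_numeral)
  then show ?thesis
    using \<open>p = 3 \<and> q = 3\<close> by (simp add: p_def q_def)
qed

lemma orthonormal_columns_imp_orthonormal_rows:
  fixes U :: "nat \<Rightarrow> nat \<Rightarrow> complex"
  assumes "\<forall>i<n. \<forall>j<n. (\<Sum>k<n. cnj (U k i) * U k j) = (if i = j then 1 else 0)"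
    and "i < n" "j < n"
  shows "(\<Sum>k<n. U i k * cnj (U j k)) = (if i = j then 1 else 0)"
proof -
  define A where "A = mat n n (\<lambda>(i, j). cnj (U j i))"
  define B where "B = mat n n (\<lambda>(i, j). U i j)"
  have "A * B = 1\<^sub>m n"
    by (rule eq_matI)
      (use assms(1) in \<open>auto simp: A_def B_def scalar_prod_def lessThan_atLeast0\<close>)
  then have "B * A = 1\<^sub>m n"
    by (rule mat_mult_left_right_inverse[rotated 2]) (auto simp: A_def B_def)
  then have "(B * A) $$ (i, j) = (if i = j then 1 else 0)"
    using assms by simp
  then show ?thesis
    using assms by (simp add: A_def B_def scalar_prod_def lessThan_atLeast0)
qed

lemma count_list_conv_sum: "count_list xs x = (\<Sum>k<length xs. if xs ! k = x then 1 else 0)"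
  by (simp add: count_list_eq_length_filter length_filter_conv_card sum.If_cases
      Collect_conj_eq lessThan_def Int_commute eq_commute)

lemma count_list_eq_1_imp_unique_index:
  assumes "count_list xs x = 1"
  obtains k where "k < length xs" "\<And>k'. k' < length xs \<Longrightarrow> xs ! k' = x \<longleftrightarrow> k' = k"
proof -
  have "card {k. k < length xs \<and> x = xs ! k} = 1"
    using assms by (simp add: count_list_eq_length_filter length_filter_conv_card)
  then obtain k where "{k. k < length xs \<and> x = xs ! k} = {k}"
    by (auto simp: card_1_singleton_iff)
  then show ?thesis
    using that by (metis (mono_tags, lifting) mem_Collect_eq singletonD singletonI)
qed

lemma sum_lessThan_8: "(\<Sum>l<8. f l) = f 0 + f 1 + f 2 + f 3 + f 4 + f 5 + f 6 + f (7::nat)"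
  by (simp add: eval_nat_numeral add.commute add.left_commute)

lemma less_8_cases: "(m::nat) < 8 \<longleftrightarrow> m \<in> {0, 1, 2, 3, 4, 5, 6, 7}"
  by auto

lemma Smat_orthogonality:
  assumes "m < 8" "m' < 8"
  shows "(\<Sum>l<8. Smat 0 m * Smat l m * (Smat l m' / Smat 0 m')) = (if m = m' then 1 else 0)"
  using assms unfolding less_8_cases sum_lessThan_8
  by (auto simp: Smat_def S6_def)

lemma fusionN_6_6: "(\<Sum>v<8. fusionN 6 6 v * g v) = g 0 + g 2 + g 3 + g 4 + g 5"
  by (simp add: sum_lessThan_8 fusionN_def Smat_def S6_def field_simps)

lemma Smat_6_4: "Smat 6 4 = 0"
  by (simp add: Smat_def S6_def)

locale matched_nimrep =
  fixes n :: nat and G :: "nat \<Rightarrow> nat \<Rightarrow> nat \<Rightarrow> nat" and mu :: "nat list"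
    and U :: "nat \<Rightarrow> nat \<Rightarrow> complex"
  assumes nimrep: "is_nimrep n G"
    and length_mu: "length mu = n" and set_mu: "set mu \<subseteq> {..<8}"
    and orthonormal: "\<forall>i<n. \<forall>j<n. (\<Sum>k<n. cnj (U k i) * U k j) = (if i = j then 1 else 0)"
    and eigenvectors: "\<forall>l<8. \<forall>i<n. \<forall>j<n. (\<Sum>k<n. of_nat (G l i k) * U k j)
          = U i j * complex_of_real (Smat l (mu ! j) / Smat 0 (mu ! j))"
begin

lemma G_0: "i < n \<Longrightarrow> j < n \<Longrightarrow> G 0 i j = (if i = j then 1 else 0)"
  using nimrep by (simp add: is_nimrep_def)

lemma G_sym: "l < 8 \<Longrightarrow> i < n \<Longrightarrow> j < n \<Longrightarrow> G l i j = G l j i"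
  using nimrep by (simp add: is_nimrep_def conjp_def)

lemma G_fusion: "l < 8 \<Longrightarrow> m < 8 \<Longrightarrow> i < n \<Longrightarrow> j < n \<Longrightarrow>
    real (\<Sum>k<n. G l i k * G m k j) = (\<Sum>v<8. fusionN l m v * real (G v i j))"
  using nimrep by (simp add: is_nimrep_def)

lemma mu_less_8: "k < n \<Longrightarrow> mu ! k < 8"
  using set_mu length_mu nth_mem by fastforce

lemma G_spectral:
  assumes "l < 8" "i < n" "j < n"
  shows "of_nat (G l i j) = (\<Sum>k<n. U i k * of_real (Smat l (mu!k) / Smat 0 (mu!k)) * cnj (U j k))"
proof -
  have "(\<Sum>k<n. U i k * of_real (Smat l (mu!k) / Smat 0 (mu!k)) * cnj (U j k))
      = (\<Sum>k<n. (\<Sum>p<n. of_nat (G l i p) * U p k) * cnj (U j k))"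
    using eigenvectors assms by (intro sum.cong) auto
  also have "\<dots> = (\<Sum>p<n. of_nat (G l i p) * (\<Sum>k<n. U p k * cnj (U j k)))"
    by (simp add: sum_distrib_left sum_distrib_right mult.assoc) (rule sum.swap)
  also have "\<dots> = (\<Sum>p<n. of_nat (G l i p) * (if p = j then 1 else 0))"
    using orthonormal_columns_imp_orthonormal_rows[OF orthonormal] assms by (intro sum.cong) auto
  also have "\<dots> = of_nat (G l i j)"
    using assms by (simp add: if_distrib cong: if_cong)
  finally show ?thesis ..
qed

definition proj :: "nat \<Rightarrow> nat \<Rightarrow> nat \<Rightarrow> real" where
  "proj m i j = (\<Sum>l<8. Smat 0 m * Smat l m * real (G l i j))"

lemma proj_spectral:
  assumes "m < 8" "i < n" "j < n"
  shows "of_real (proj m i j) = (\<Sum>k<n. if mu!k = m then U i k * cnj (U j k) else 0)"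
proof -
  have "of_real (proj m i j)
      = (\<Sum>l<8. of_real (Smat 0 m * Smat l m) *
           (\<Sum>k<n. U i k * of_real (Smat l (mu!k) / Smat 0 (mu!k)) * cnj (U j k)))"
    using G_spectral assms by (simp add: proj_def)
  also have "\<dots> = (\<Sum>k<n. U i k * cnj (U j k) *
           of_real (\<Sum>l<8. Smat 0 m * Smat l m * (Smat l (mu!k) / Smat 0 (mu!k))))"
    by (simp add: sum_distrib_left sum_distrib_right mult_ac) (rule sum.swap)
  also have "\<dots> = (\<Sum>k<n. if mu!k = m then U i k * cnj (U j k) else 0)"
    using Smat_orthogonality assms mu_less_8 by (intro sum.cong) auto
  finally show ?thesis .
qed

lemma proj_sym: "i < n \<Longrightarrow> j < n \<Longrightarrow> proj m i j = proj m j i"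
  using G_sym by (auto simp: proj_def intro!: sum.cong)

lemma proj_trace:
  assumes "m < 8"
  shows "(\<Sum>i<n. proj m i i) = count_list mu m"
proof -
  have "(of_real (\<Sum>i<n. proj m i i) :: complex)
      = (\<Sum>i<n. \<Sum>k<n. if mu!k = m then U i k * cnj (U i k) else 0)"
    using proj_spectral assms by simp
  also have "\<dots> = (\<Sum>k<n. if mu!k = m then \<Sum>i<n. cnj (U i k) * U i k else 0)"
    by (subst sum.swap) (auto intro!: sum.cong simp: mult.commute)
  also have "\<dots> = (\<Sum>k<n. if mu!k = m then 1 else 0)"
    using orthonormal by (intro sum.cong) auto
  also have "\<dots> = of_nat (count_list mu m)"
    by (auto simp: count_list_conv_sum length_mu intro!: sum.cong)
  finally show ?thesis
    by (metis of_real_eq_iff of_real_of_nat_eq)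
qed

lemma proj_eq_0:
  assumes "count_list mu m = 0" "m < 8" "i < n" "j < n"
  shows "proj m i j = 0"
proof -
  have "\<forall>k<n. mu ! k \<noteq> m"
    using assms(1) length_mu by (auto simp: count_list_0_iff)
  then show ?thesis
    using proj_spectral[OF assms(2-4)] by simp
qed

lemma proj_rank_one:
  assumes "count_list mu m = 1" "m < 8" "i < n" "j < n" "k < n" "l < n"
  shows "proj m i j * proj m k l = proj m i l * proj m k j"
proof -
  obtain c where c: "c < n" "\<And>k. k < n \<Longrightarrow> mu ! k = m \<longleftrightarrow> k = c"
    using count_list_eq_1_imp_unique_index[OF assms(1)] length_mu by metis
  have col: "of_real (proj m a b) = U a c * cnj (U b c)" if "a < n" "b < n" for a b
    using proj_spectral[OF assms(2) that] c by (simp cong: if_cong)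
  have "(of_real (proj m i j * proj m k l) :: complex) = of_real (proj m i l * proj m k j)"
    using assms by (simp add: col mult_ac)
  then show ?thesis
    by (simp only: of_real_eq_iff)
qed

lemma proj_psd:
  assumes "m < 8" "T \<subseteq> {..<n}"
  shows "0 \<le> (\<Sum>i\<in>T. \<Sum>j\<in>T. proj m i j)"
proof -
  have "(of_real (\<Sum>i\<in>T. \<Sum>j\<in>T. proj m i j) :: complex)
      = (\<Sum>i\<in>T. \<Sum>j\<in>T. \<Sum>k<n. if mu!k = m then U i k * cnj (U j k) else 0)"
    using proj_spectral assms by (auto intro!: sum.cong)
  also have "\<dots> = (\<Sum>k<n. \<Sum>i\<in>T. \<Sum>j\<in>T. if mu!k = m then U i k * cnj (U j k) else 0)"
    by (subst sum.swap, rule sum.cong[OF refl], rule sum.swap)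
  also have "\<dots> = (\<Sum>k<n. if mu!k = m then (\<Sum>i\<in>T. U i k) * cnj (\<Sum>i\<in>T. U i k) else 0)"
    by (rule sum.cong[OF refl]) (simp add: sum_product cnj_sum)
  also have "\<dots> = of_real (\<Sum>k<n. if mu!k = m then (Re (\<Sum>i\<in>T. U i k))^2 + (Im (\<Sum>i\<in>T. U i k))^2 else 0)"
    unfolding of_real_sum
    by (intro sum.cong refl) (simp only: complex_mult_cnj if_distrib[of complex_of_real] of_real_0)
  finally have "(\<Sum>i\<in>T. \<Sum>j\<in>T. proj m i j)
      = (\<Sum>k<n. if mu!k = m then (Re (\<Sum>i\<in>T. U i k))^2 + (Im (\<Sum>i\<in>T. U i k))^2 else 0)"
    by (simp only: of_real_eq_iff)
  then show ?thesis
    by (simp add: sum_nonneg)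
qed

lemma G_proj:
  assumes "l < 8" "m < 8" "i < n" "j < n"
  shows "(\<Sum>k<n. real (G l i k) * proj m k j) = Smat l m / Smat 0 m * proj m i j"
proof -
  have "(of_real (\<Sum>k<n. real (G l i k) * proj m k j) :: complex)
      = (\<Sum>k<n. of_nat (G l i k) * (\<Sum>a<n. if mu!a = m then U k a * cnj (U j a) else 0))"
    using proj_spectral assms by simp
  also have "\<dots> = (\<Sum>k<n. \<Sum>a<n. if mu!a = m then of_nat (G l i k) * U k a * cnj (U j a) else 0)"
    by (simp add: sum_distrib_left if_distrib mult.assoc cong: if_cong)
  also have "\<dots> = (\<Sum>a<n. if mu!a = m then (\<Sum>k<n. of_nat (G l i k) * U k a) * cnj (U j a) else 0)"
    by (subst sum.swap) (auto simp: sum_distrib_right intro!: sum.cong)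
  also have "\<dots> = (\<Sum>a<n. if mu!a = m then of_real (Smat l m / Smat 0 m) * (U i a * cnj (U j a)) else 0)"
    using eigenvectors assms by (intro sum.cong refl) (simp add: mult_ac)
  also have "\<dots> = of_real (Smat l m / Smat 0 m)
                    * (\<Sum>a<n. if mu!a = m then U i a * cnj (U j a) else 0)"
    by (simp only: sum_distrib_left if_distrib[of "times _"] mult_zero_right)
  also have "\<dots> = of_real (Smat l m / Smat 0 m * proj m i j)"
    using proj_spectral assms by simp
  finally show ?thesis
    by (simp only: of_real_eq_iff)
qed

lemma proj_orthogonal:
  assumes "m \<noteq> m'" "m < 8" "m' < 8" "i < n" "j < n"
  shows "(\<Sum>k<n. proj m i k * proj m' k j) = 0"
proof -
  have "(\<Sum>k<n. proj m i k * proj m' k j)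
      = (\<Sum>l<8. Smat 0 m' * Smat l m' * (\<Sum>k<n. real (G l j k) * proj m k i))"
    using assms proj_sym G_sym
    by (simp add: proj_def[of m'] sum_distrib_left sum_distrib_right mult_ac sum.swap[of _ "{..<8}"])
  also have "\<dots> = proj m j i * (\<Sum>l<8. Smat 0 m' * Smat l m' * (Smat l m / Smat 0 m))"
    using G_proj assms by (simp add: sum_distrib_left mult_ac)
  also have "\<dots> = 0"
    using Smat_orthogonality assms by simp
  finally show ?thesis .
qed

lemma proj_square:
  assumes "count_list mu m = 1" "m < 8" "i < n" "j < n"
  shows "(proj m i j)^2 = proj m i i * proj m j j"
  using proj_rank_one[OF assms(1,2) assms(3,4) assms(4,3)] proj_sym[OF assms(3,4)]
  by (simp add: power2_eq_square)

lemma int_gram_if_proj_multiple: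
  fixes K :: "nat \<Rightarrow> nat \<Rightarrow> int"
  assumes "count_list mu m = 1" "m < 8"
    and K: "\<And>i j. i < n \<Longrightarrow> j < n \<Longrightarrow> real_of_int (K i j) = c * proj m i j"
    and "i < n" "j < n"
  shows "(K i j)^2 = K i i * K j j"
proof -
  have "real_of_int ((K i j)^2) = c^2 * (proj m i j)^2"
    using K assms by (simp add: power_mult_distrib)
  also have "\<dots> = real_of_int (K i i * K j j)"
    using proj_square[OF assms(1,2,4,5)] K assms by (simp add: power2_eq_square)
  finally show ?thesis
    by (simp only: of_int_eq_iff)
qed

lemma trace_if_proj_multiple:
  fixes K :: "nat \<Rightarrow> nat \<Rightarrow> int"
  assumes "m < 8" and K: "\<And>i j. i < n \<Longrightarrow> j < n \<Longrightarrow> real_of_int (K i j) = c * proj m i j"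
  shows "real_of_int (\<Sum>i<n. K i i) = c * count_list mu m"
  using K proj_trace[OF assms(1)] by (simp add: sum_distrib_left[symmetric])

lemma proj_0:
  fixes i j :: nat
  defines "g \<equiv> \<lambda>l. real (G l i j)"
  shows "proj 0 i j = (g 0 + g 1 + 2 * g 2 + 2 * g 3 + 2 * g 4 + 2 * g 5 + 3 * g 6 + 3 * g 7) / 36"
  by (simp add: proj_def sum_lessThan_8 Smat_def S6_def g_def field_simps)

lemma proj_1:
  fixes i j :: nat
  defines "g \<equiv> \<lambda>l. real (G l i j)"
  shows "proj 1 i j = (g 0 + g 1 + 2 * g 2 + 2 * g 3 + 2 * g 4 + 2 * g 5 - 3 * g 6 - 3 * g 7) / 36"
  by (simp add: proj_def sum_lessThan_8 Smat_def S6_def g_def field_simps)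

lemma proj_2:
  fixes i j :: nat
  defines "g \<equiv> \<lambda>l. real (G l i j)"
  shows "proj 2 i j = (g 0 + g 1 + 2 * g 2 - g 3 - g 4 - g 5) / 9"
  by (simp add: proj_def sum_lessThan_8 Smat_def S6_def g_def field_simps)

lemma proj_3:
  fixes i j :: nat
  defines "g \<equiv> \<lambda>l. real (G l i j)"
  shows "proj 3 i j = (g 0 + g 1 - g 2 + 2 * g 3 - g 4 - g 5) / 9"
  by (simp add: proj_def sum_lessThan_8 Smat_def S6_def g_def field_simps)

lemma proj_4:
  fixes i j :: nat
  defines "g \<equiv> \<lambda>l. real (G l i j)"
  shows "proj 4 i j = (g 0 + g 1 - g 2 - g 3 - g 4 + 2 * g 5) / 9"
  by (simp add: proj_def sum_lessThan_8 Smat_def S6_def g_def field_simps)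

lemma proj_6:
  fixes i j :: nat
  defines "g \<equiv> \<lambda>l. real (G l i j)"
  shows "proj 6 i j = (g 0 - g 1 + g 6 - g 7) / 4"
  by (simp add: proj_def sum_lessThan_8 Smat_def S6_def g_def field_simps)

lemma proj_7:
  fixes i j :: nat
  defines "g \<equiv> \<lambda>l. real (G l i j)"
  shows "proj 7 i j = (g 0 - g 1 - g 6 + g 7) / 4"
  by (simp add: proj_def sum_lessThan_8 Smat_def S6_def g_def field_simps)

end

locale matched_nimrep_014 = matched_nimrep +
  assumes count_0: "count_list mu 0 = 1" and count_1: "count_list mu 1 = 1"
    and count_4: "count_list mu 4 = 1"
    and count_6: "count_list mu 6 = 0" and count_7: "count_list mu 7 = 0"
begin

lemma G_1_eq_G_0: "i < n \<Longrightarrow> j < n \<Longrightarrow> G 1 i j = G 0 i j"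
  and G_7_eq_G_6: "i < n \<Longrightarrow> j < n \<Longrightarrow> G 7 i j = G 6 i j"
proof -
  assume "i < n" "j < n"
  then have "proj 6 i j = 0" "proj 7 i j = 0"
    using proj_eq_0 count_6 count_7 by auto
  then have "real (G 1 i j) = real (G 0 i j)" "real (G 7 i j) = real (G 6 i j)"
    unfolding proj_6 proj_7 by (simp_all add: field_simps)
  then show "G 1 i j = G 0 i j" "G 7 i j = G 6 i j"
    by simp_all
qed

lemma proj_1_eq: "i < n \<Longrightarrow> j < n \<Longrightarrow> proj 1 i j = proj 0 i j - real (G 6 i j) / 3"
  unfolding proj_0 proj_1 using G_1_eq_G_0 G_7_eq_G_6 by (simp add: field_simps)

lemma n_pos: "0 < n"
  using proj_trace[of 0] count_0 by (cases n) auto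

lemma G_6_diag: "i < n \<Longrightarrow> G 6 i i = 0"
proof -
  have "(\<Sum>i<n. proj 1 i i) = (\<Sum>i<n. proj 0 i i - real (G 6 i i) / 3)"
    by (intro sum.cong refl) (rule proj_1_eq; simp)
  then have "(\<Sum>i<n. proj 0 i i) - (\<Sum>i<n. real (G 6 i i)) / 3 = (\<Sum>i<n. proj 1 i i)"
    by (simp add: sum_subtractf sum_divide_distrib)
  also have "\<dots> = (\<Sum>i<n. proj 0 i i)"
    using proj_trace[of 0] proj_trace[of 1] count_0 count_1 by simp
  finally have "real (\<Sum>i<n. G 6 i i) = 0"
    by simp
  then show "i < n \<Longrightarrow> G 6 i i = 0"
    by (simp only: of_nat_eq_0_iff) simp
qed

lemma proj_0_diag: "i < n \<Longrightarrow> 1 / 18 \<le> proj 0 i i"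
  using G_0[of i i] G_1_eq_G_0[of i i] by (simp add: proj_0)

lemma G_6_dichotomy:
  assumes "i < n" "j < n"
  shows "G 6 i j = 0 \<or> real (G 6 i j) = 6 * proj 0 i j"
proof -
  have "(proj 1 i j)^2 = proj 1 i i * proj 1 j j"
    using proj_square[OF count_1] assms by simp
  also have "\<dots> = (proj 0 i j)^2"
    using proj_square[OF count_0] assms proj_1_eq G_6_diag by simp
  finally have "(proj 1 i j)^2 = (proj 0 i j)^2" .
  then have "real (G 6 i j) * (real (G 6 i j) - 6 * proj 0 i j) = 0"
    unfolding proj_1_eq[OF assms] by (simp add: power2_eq_square algebra_simps)
  then show ?thesis
    by simp
qed

(* side i is the sign s_i (True for +1), normalised by s_0 = +1; see proj_1_side. *)
definition side :: "nat \<Rightarrow> bool" where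
  "side i \<longleftrightarrow> G 6 i 0 = 0"

definition part :: "bool \<Rightarrow> nat set" where
  "part s = {i. i < n \<and> side i = s}"

lemma side_0: "side 0"
  using G_6_diag n_pos by (simp add: side_def)

lemma proj_1_side:
  assumes "i < n" "j < n"
  shows "proj 1 i j = (if side i = side j then proj 0 i j else - proj 0 i j)"
proof -
  have column_0: "proj 1 k 0 = (if side k then proj 0 k 0 else - proj 0 k 0)" if "k < n" for k
    using G_6_dichotomy[OF that n_pos] proj_1_eq[OF that n_pos] by (auto simp: side_def)
  have "proj 1 i j * proj 1 0 0 = proj 1 i 0 * proj 1 j 0"
    using proj_rank_one[OF count_1 _ assms n_pos n_pos] proj_sym[OF n_pos assms(2)] by simp
  also have "\<dots> = (if side i = side j then 1 else -1) * (proj 0 i 0 * proj 0 j 0)"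
    using column_0 assms by auto
  also have "proj 0 i 0 * proj 0 j 0 = proj 0 i j * proj 0 0 0"
    using proj_rank_one[OF count_0 _ assms n_pos n_pos] proj_sym[OF n_pos assms(2)] by simp
  finally have "proj 1 i j * proj 0 0 0 = (if side i = side j then 1 else -1) * proj 0 i j * proj 0 0 0"
    using column_0[OF n_pos] side_0 by simp
  moreover have "proj 0 0 0 \<noteq> 0"
    using proj_0_diag[OF n_pos] by linarith
  ultimately show ?thesis
    by auto
qed

lemma G_6_side:
  assumes "i < n" "j < n"
  shows "real (G 6 i j) = (if side i = side j then 0 else 6 * proj 0 i j)"
  using proj_1_side[OF assms] proj_1_eq[OF assms] by auto

lemma finite_part: "finite (part s)"
  by (simp add: part_def)

lemma part_less: "i \<in> part s \<Longrightarrow> i < n"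
  by (simp add: part_def)

lemma sum_parts: "(\<Sum>i<n. f i) = (\<Sum>i\<in>part True. f i) + (\<Sum>i\<in>part False. f i)"
proof -
  have "{..<n} = part True \<union> part False" "part True \<inter> part False = {}"
    by (auto simp: part_def)
  then show ?thesis
    by (simp add: sum.union_disjoint finite_part)
qed

lemma proj_0_part_trace: "(\<Sum>i\<in>part s. proj 0 i i) = 1 / 2"
proof -
  have "0 = (\<Sum>k<n. proj 0 0 k * proj 1 k 0)"
    using proj_orthogonal[of 0 1] n_pos by simp
  also have "\<dots> = (\<Sum>k<n. proj 0 0 0 * (if side k then proj 0 k k else - proj 0 k k))"
    using proj_1_side side_0 n_pos proj_rank_one[OF count_0, of 0 _ _ 0] proj_sym
    by (intro sum.cong refl) (auto simp: mult.commute)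
  also have "\<dots> = proj 0 0 0 * ((\<Sum>i\<in>part True. proj 0 i i) - (\<Sum>i\<in>part False. proj 0 i i))"
    unfolding sum_parts by (simp add: part_def sum_distrib_left sum_negf right_diff_distrib)
  finally have "(\<Sum>i\<in>part True. proj 0 i i) = (\<Sum>i\<in>part False. proj 0 i i)"
    using proj_0_diag[OF n_pos] by simp
  moreover have "(\<Sum>i\<in>part True. proj 0 i i) + (\<Sum>i\<in>part False. proj 0 i i) = 1"
    using proj_trace[of 0] count_0 unfolding sum_parts by simp
  ultimately show ?thesis
    by (cases s) simp_all
qed

lemma G_6_across_squares: "(\<Sum>i\<in>part True. \<Sum>j\<in>part False. (G 6 i j)^2) = 9"
proof -
  have "real (\<Sum>i\<in>part True. \<Sum>j\<in>part False. (G 6 i j)^2)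
      = (\<Sum>i\<in>part True. \<Sum>j\<in>part False. 36 * (proj 0 i i * proj 0 j j))"
    using G_6_side proj_square[OF count_0] by (auto simp: part_def power_mult_distrib intro!: sum.cong)
  also have "\<dots> = 36 * ((\<Sum>i\<in>part True. proj 0 i i) * (\<Sum>j\<in>part False. proj 0 j j))"
    unfolding sum_product by (simp only: sum_distrib_left)
  also have "\<dots> = 9"
    by (simp add: proj_0_part_trace)
  finally show ?thesis
    by (simp only: of_nat_eq_iff of_nat_numeral)
qed

lemma G_6_across_pos:
  assumes "i \<in> part True" "j \<in> part False"
  shows "1 \<le> G 6 i j"
proof -
  have ij: "i < n" "j < n" "side i \<noteq> side j"
    using assms by (auto simp: part_def)
  have "0 < proj 0 i i" "0 < proj 0 j j"
    using proj_0_diag ij by (meson less_le_trans zero_less_divide_1_iff zero_less_numeral)+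
  then have "0 < proj 0 i i * proj 0 j j"
    by simp
  then have "proj 0 i j \<noteq> 0"
    using proj_square[OF count_0 _ ij(1,2)] by auto
  then show ?thesis
    using G_6_side[OF ij(1,2)] ij(3) by (simp add: Suc_le_eq)
qed

lemma G_6_complete_bipartite:
  assumes "n = 6 \<or> n = 8"
  shows "card (part True) = 3" "card (part False) = 3"
    and "i \<in> part True \<Longrightarrow> j \<in> part False \<Longrightarrow> G 6 i j = 1"
proof -
  have "card (part True) + card (part False) = n"
    using sum_parts[of "\<lambda>_. 1::nat"] by simp
  then have "card (part True) = 3 \<and> card (part False) = 3
      \<and> (\<forall>i\<in>part True. \<forall>j\<in>part False. G 6 i j = 1)"
    using assms finite_part G_6_across_pos G_6_across_squares
    by (intro bipartite_sum_squares_9) auto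
  then show "card (part True) = 3" "card (part False) = 3"
    and "i \<in> part True \<Longrightarrow> j \<in> part False \<Longrightarrow> G 6 i j = 1"
    by auto
qed

lemma G_6_eq_side_indicator:
  assumes "n = 6 \<or> n = 8" "i < n" "j < n"
  shows "G 6 i j = (if side i = side j then 0 else 1)"
proof (cases "side i = side j")
  case True
  then show ?thesis
    using G_6_side[OF assms(2,3)] by simp
next
  case False
  then have "G 6 i j = 1 \<or> G 6 j i = 1"
    using G_6_complete_bipartite(3)[OF assms(1)] assms(2,3) by (cases "side i") (auto simp: part_def)
  then show ?thesis
    using G_sym[of 6 i j] assms False by auto
qed

lemma G_6_square:
  assumes "n = 6 \<or> n = 8" "i < n" "j < n"
  shows "(\<Sum>k<n. G 6 i k * G 6 k j) = (if side i = side j then 3 else 0)"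
proof -
  have "(\<Sum>k\<in>part s. G 6 i k * G 6 k j)
      = card (part s) * (if side i \<noteq> s \<and> side j \<noteq> s then 1 else 0)" for s
    using G_6_eq_side_indicator[OF assms(1,2)] G_6_eq_side_indicator[OF assms(1) _ assms(3)]
    by (simp add: part_def)
  then show ?thesis
    unfolding sum_parts using G_6_complete_bipartite(1,2)[OF assms(1)] by auto
qed

lemma proj_4_eq_bipartite:
  assumes "n = 6 \<or> n = 8" "i < n" "j < n"
  shows "3 * proj 4 i j = real (G 0 i j) + real (G 5 i j) - (if side i = side j then 1 else 0)"
proof -
  have "real (G 0 i j) + real (G 2 i j) + real (G 3 i j) + real (G 4 i j) + real (G 5 i j)
      = (if side i = side j then 3 else 0)"
    using G_fusion[of 6 6 i j] G_6_square[OF assms] assms fusionN_6_6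
    by (cases "side i = side j") simp_all
  then show ?thesis
    unfolding proj_4 using G_1_eq_G_0[OF assms(2,3)] by (simp add: field_simps split: if_splits)
qed

lemma proj_4_part_sums:
  assumes "n = 6 \<or> n = 8" "j < n"
  shows "(\<Sum>i\<in>part s. proj 4 i j) = 0"
proof -
  have "part (\<not> s) \<noteq> {}"
    using G_6_complete_bipartite(1,2)[OF assms(1)] by (cases s) auto
  then obtain a where "a \<in> part (\<not> s)"
    by blast
  then have "a < n" "side a = (\<not> s)"
    by (auto simp: part_def)
  have "0 = (\<Sum>k<n. real (G 6 a k) * proj 4 k j)"
    using G_proj[of 6 4 a j] \<open>a < n\<close> assms Smat_6_4 by simp
  also have "\<dots> = (\<Sum>k\<in>part s. proj 4 k j)"
    unfolding sum_parts using G_6_eq_side_indicator[OF assms(1) \<open>a < n\<close>] \<open>side a = (\<not> s)\<close>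
    by (cases s) (simp_all add: part_def)
  finally show ?thesis ..
qed

lemma dim_6_or_8_impossible: "n = 6 \<or> n = 8 \<Longrightarrow> False"
proof -
  assume n: "n = 6 \<or> n = 8"
  define K :: "nat \<Rightarrow> nat \<Rightarrow> int" where
    "K i j = int (G 0 i j) + int (G 5 i j) - (if side i = side j then 1 else 0)" for i j
  have K: "real_of_int (K i j) = 3 * proj 4 i j" if "i < n" "j < n" for i j
    using proj_4_eq_bipartite[OF n that] by (simp add: K_def)
  have even_part: "even (\<Sum>i\<in>part s. K i i)" for s
  proof (rule even_trace_if_gram_zero_column_sums[where K = K, OF finite_part])
    show "(K i j)^2 = K i i * K j j" if "i \<in> part s" "j \<in> part s" for i j
      using int_gram_if_proj_multiple[OF count_4 _ K] that part_less by simp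
    show "(\<Sum>i\<in>part s. K i j) = 0" if "j \<in> part s" for j
    proof -
      have "real_of_int (\<Sum>i\<in>part s. K i j) = 3 * (\<Sum>i\<in>part s. proj 4 i j)"
        using K part_less that by (simp add: sum_distrib_left)
      then show ?thesis
        using proj_4_part_sums[OF n part_less[OF that]] by (simp del: of_int_sum)
    qed
  qed
  have "(\<Sum>i<n. K i i) = 3"
    using trace_if_proj_multiple[OF _ K] count_4 by (simp del: of_int_sum)
  then have "(\<Sum>i\<in>part True. K i i) + (\<Sum>i\<in>part False. K i i) = 3"
    unfolding sum_parts .
  then show False
    using even_part[of True] even_part[of False] by (metis even_add odd_numeral)
qed

lemma exponents_2_3_impossible:
  assumes "count_list mu 2 = 0" "count_list mu 3 = 0"
  shows False
proof -
  define K :: "nat \<Rightarrow> nat \<Rightarrow> int" where "K i j = 2 * int (G 0 i j) - int (G 4 i j)" for i j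
  have K: "real_of_int (K i j) = 3 * proj 4 i j" if "i < n" "j < n" for i j
  proof -
    have "proj 2 i j = 0" "proj 3 i j = 0"
      using proj_eq_0 assms that by auto
    then show ?thesis
      using G_1_eq_G_0[OF that] unfolding proj_2 proj_3 proj_4 K_def by (simp add: field_simps)
  qed
  have block_sums: "0 \<le> (\<Sum>i\<in>T. \<Sum>j\<in>T. K i j)" if "T \<subseteq> {..<n}" for T
  proof -
    have "real_of_int (\<Sum>i\<in>T. \<Sum>j\<in>T. K i j) = 3 * (\<Sum>i\<in>T. \<Sum>j\<in>T. proj 4 i j)"
      using K that by (auto simp: sum_distrib_left intro!: sum.cong)
    then have "0 \<le> real_of_int (\<Sum>i\<in>T. \<Sum>j\<in>T. K i j)"
      using proj_psd[of 4 T] that by simp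
    then show ?thesis
      by (simp only: of_int_0_le_iff)
  qed
  have "(\<Sum>i<n. K i i) \<noteq> 3"
  proof (rule gram_trace_ne_3[where K = K])
    show "0 \<le> K i i \<and> K i i \<le> 2" if "i \<in> {..<n}" for i
      using block_sums[of "{i}"] that G_0[of i i] by (simp add: K_def)
    show "K i j \<le> 0" if "i \<in> {..<n}" "j \<in> {..<n}" "i \<noteq> j" for i j
      using that G_0 by (simp add: K_def)
    show "(K i j)^2 = K i i * K j j" if "i \<in> {..<n}" "j \<in> {..<n}" for i j
      using int_gram_if_proj_multiple[OF count_4 _ K] that by simp
  qed (use block_sums in auto)
  moreover have "(\<Sum>i<n. K i i) = 3"
    using trace_if_proj_multiple[OF _ K] count_4 by (simp del: of_int_sum)
  ultimately show False
    by simp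
qed

end

lemma nimless_if_exponents:
  fixes Z :: "nat \<Rightarrow> nat \<Rightarrow> nat"
  assumes "Z 0 0 = 1" "Z 1 1 = 1" "Z 4 4 = 1" "Z 6 6 = 0" "Z 7 7 = 0"
    and "(\<Sum>v<8. Z v v) \<in> {6, 8} \<or> Z 2 2 = 0 \<and> Z 3 3 = 0"
  shows "nimless Z"
  unfolding nimless_def
proof clarify
  fix n G
  assume "is_nimrep n G" "matches Z n G"
  then obtain mu U where nimrep: "matched_nimrep n G mu U" and n: "n = (\<Sum>v<8. Z v v)"
    and count: "\<And>v. v < 8 \<Longrightarrow> count_list mu v = Z v v"
    unfolding matches_def matched_nimrep_def by blast
  interpret matched_nimrep n G mu U
    by (rule nimrep)
  interpret matched_nimrep_014 n G mu U
    using assms by unfold_locales (simp_all add: count)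
  show False
    using assms(6) dim_6_or_8_impossible exponents_2_3_impossible n count by auto
qed

theorem proposition6p2:
  shows "nimless Z21 \<and> nimless Z61 \<and> nimless Z3 \<and> nimless Z4 \<and>
         nimless Z1 \<and> nimless Z12 \<and> nimless Z2 \<and> nimless Z16"
  by (intro conjI nimless_if_exponents)
    (simp_all add: Z1_def Z2_def Z3_def Z4_def Z12_def Z21_def Z16_def Z61_def
      la_def lb_def ind_def Eu_def sum_lessThan_8)

end
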